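(* Let $n\ge2$ and let $G,H$ be non-zero $n$-dimensional real tensors. Let their $n$-dimensional convolution $(G*H)(t)=\sum_{\tau\in\mathbb{Z}^n}G(\tau)H(t-\tau)$ be evaluated on a box of consecutive output positions of size $s_1\times\cdots\times s_n$, giving $G*H\in\mathbb{R}^{s_1\times\cdots\times s_n}$. Then for each $k=1,\dots,n$, $\operatorname{rank}(k,G*H)\le\min\big(s_k,\operatorname{rank}(k,G)\operatorname{rank}(k,H)\big)$.
   Context: Tensors are indexed from $0$ and regarded as functions on $\mathbb{Z}^n$ vanishing outside their index ranges. For a tensor $A$, $\operatorname{rank}(k,A)$ is the $k$-th Tucker rank, i.e. the rank of the mode-$k$ matricization of $A$ (the matrix whose columns are the mode-$k$ fibers of $A$); for a matrix this is its column/row rank. *)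

theory Defs
  imports "Jordan_Normal_Form.DL_Rank"
begin

text \<open>An n-dimensional real tensor with index ranges d (a list of length n) is
  represented as a function on integer index lists (points of Z^n) that vanishes
  outside the box of valid indices.\<close>

definition in_box :: "nat list \<Rightarrow> int list \<Rightarrow> bool" where
  "in_box d x \<longleftrightarrow> length x = length d \<and> (\<forall>i<length d. 0 \<le> x ! i \<and> x ! i < int (d ! i))"

definition is_tensor :: "nat list \<Rightarrow> (int list \<Rightarrow> real) \<Rightarrow> bool" where
  "is_tensor d A \<longleftrightarrow> (\<forall>x. \<not> in_box d x \<longrightarrow> A x = 0)"

definition mode_fiber :: "nat \<Rightarrow> nat list \<Rightarrow> (int list \<Rightarrow> real) \<Rightarrow> int list \<Rightarrow> real vec" where
  "mode_fiber k d A x = vec (d ! k) (\<lambda>i. A (x[k := int i]))"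

text \<open>Mode-k matricization: the (d!k) x (product of the other d!j) matrix whose
  columns are all mode-k fibers of A (column order is irrelevant for the rank).\<close>
definition matricization :: "nat \<Rightarrow> nat list \<Rightarrow> (int list \<Rightarrow> real) \<Rightarrow> real mat" where
  "matricization k d A = mat_of_cols (d ! k)
     [mode_fiber k d A (map int x). x \<leftarrow> product_lists (map (\<lambda>m. [0..<m]) (d[k := 1]))]"

text \<open>Tucker rank rank(k,A) (k is 0-based here).\<close>
definition tucker_rank :: "nat \<Rightarrow> nat list \<Rightarrow> (int list \<Rightarrow> real) \<Rightarrow> nat" where
  "tucker_rank k d A = vec_space.rank (d ! k) (matricization k d A)"

text \<open>n-dimensional convolution (G*H)(t) = sum over tau in Z^n of G(tau) H(t - tau);
  only the finitely many tau with G tau \<noteq> 0 contribute.\<close>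
definition conv :: "(int list \<Rightarrow> real) \<Rightarrow> (int list \<Rightarrow> real) \<Rightarrow> int list \<Rightarrow> real" where
  "conv G H t = (\<Sum>\<tau> \<in> {\<tau>. length \<tau> = length t \<and> G \<tau> \<noteq> 0}. G \<tau> * H (map2 (-) t \<tau>))"

definition conv_box :: "int list \<Rightarrow> nat list \<Rightarrow> (int list \<Rightarrow> real) \<Rightarrow> (int list \<Rightarrow> real) \<Rightarrow> int list \<Rightarrow> real" where
  "conv_box off s G H j = (if in_box s j then conv G H (map2 (+) off j) else 0)"

end

theory Submission
  imports Defs
begin

(* If the mode-k fibers of a tensor A are spanned by r vectors u, then
   A x = sum_u c_u(x) u(x_k) with coefficients c_u that do not depend on x_k. Substituting such
   decompositions of G and H into (G*H)(t) = sum_tau G(tau) H(t - tau) and splitting tau into its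
   k-th coordinate a and the rest, (G*H)(t) becomes a sum over pairs (u, v) of a coefficient that
   does not depend on t_k times the one-dimensional convolution sum_a u(a) v(t_k - a). So the
   mode-k fibers of G*H lie in the span of rank(k,G) rank(k,H) vectors. The bound s_k is just the
   number of rows of the matricization. *)

lemma map2_update_left:
  "k < length ys \<Longrightarrow> map2 f (xs[k := a]) ys = (map2 f xs ys)[k := f a (ys ! k)]"
  by (cases "k < length xs") (auto intro!: nth_equalityI simp: nth_list_update)

lemma map2_update_right:
  "k < length xs \<Longrightarrow> map2 f xs (ys[k := a]) = (map2 f xs ys)[k := f (xs ! k) a]"
  by (cases "k < length ys") (auto intro!: nth_equalityI simp: nth_list_update)

lemma (in vec_space) rank_le_nr:
  assumes "A \<in> carrier_mat n nc"
  shows "rank A \<le> n"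
proof -
  have "set (cols A) \<subseteq> carrier_vec n" using assms cols_dim by blast
  then have "subspace class_ring (span (set (cols A))) V" by (intro span_is_subspace) simp
  then show ?thesis
    unfolding rank_def using subspace_dim fin_dim fin_dim_span_cols[OF assms] dim_is_n by metis
qed

lemma (in vec_space) rank_le_card_spanning_set:
  assumes A: "A \<in> carrier_mat n nc" and W: "W \<subseteq> carrier_vec n" "finite W"
    and cols: "set (cols A) \<subseteq> span W"
  shows "rank A \<le> card W"
proof -
  have vs: "vectorspace class_ring (vs (span W))"
    using span_is_subspace[THEN subspace_is_vs, of W] W by auto
  have sm: "submodule class_ring (span W) V" using W by (simp add: span_is_submodule)
  have sub: "subspace class_ring (span (set (cols A))) (vs (span W))"
    using vectorspace.span_is_subspace[OF vs, of "set (cols A)",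
        unfolded span_li_not_depend(1)[OF cols sm]] cols by auto
  have fd: "vectorspace.fin_dim class_ring (vs (span W))"
    "vectorspace.fin_dim class_ring (vs (span W)\<lparr>carrier := span (set (cols A))\<rparr>)"
    using fin_dim_span fin_dim_span_cols A W by auto
  have WW: "W \<subseteq> span W" using in_own_span W by auto
  have "LinearCombinations.module.span class_ring (vs (span W)) W = carrier (vs (span W))"
    using span_li_not_depend(1)[OF WW sm] by simp
  then have "vectorspace.dim class_ring (vs (span W)) \<le> card W"
    using vectorspace.gen_ge_dim[OF vs W(2)] WW by simp
  then show ?thesis
    unfolding rank_def using vectorspace.subspace_dim[OF vs sub fd] by simp
qed

lemma (in vec_space) sum_smult_in_span:
  assumes "finite Q" "f ` Q \<subseteq> carrier_vec n"
  shows "vec n (\<lambda>i. \<Sum>q\<in>Q. b q * f q $ i) \<in> span (f ` Q)"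
  using assms
proof (induction Q rule: finite_induct)
  case empty
  then show ?case using span_empty by (simp add: zero_vec_def)
next
  case (insert q Q)
  let ?W = "f ` insert q Q" and ?v = "vec n (\<lambda>i. \<Sum>p\<in>Q. b p * f p $ i)"
  have W: "?W \<subseteq> carrier_vec n" using insert.prems .
  have "?v \<in> span ?W"
    using insert span_is_monotone[of "f ` Q" ?W] by auto
  moreover have "b q \<cdot>\<^sub>v f q \<in> span ?W"
    using smult_in_span[OF W] span_mem[OF W] by simp
  ultimately have "b q \<cdot>\<^sub>v f q + ?v \<in> span ?W"
    using span_add1[OF W] by simp
  moreover have "vec n (\<lambda>i. \<Sum>p\<in>insert q Q. b p * f p $ i) = b q \<cdot>\<^sub>v f q + ?v"
    using insert W by (intro eq_vecI) (auto simp: mult.commute)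
  ultimately show ?case by simp
qed

lemma (in vec_space) rank_le_card_of_combinations:
  assumes A: "A \<in> carrier_mat n nc" and Q: "finite Q" "f ` Q \<subseteq> carrier_vec n"
    and cols: "\<And>c. c \<in> set (cols A) \<Longrightarrow> \<exists>\<beta>. \<forall>i<n. c $ i = (\<Sum>q\<in>Q. \<beta> q * f q $ i)"
  shows "rank A \<le> card Q"
proof -
  have "set (cols A) \<subseteq> span (f ` Q)"
  proof
    fix c assume c: "c \<in> set (cols A)"
    then obtain \<beta> where \<beta>: "\<forall>i<n. c $ i = (\<Sum>q\<in>Q. \<beta> q * f q $ i)" using cols by blast
    have "c \<in> carrier_vec n" using c A cols_dim by blast
    then have "c = vec n (\<lambda>i. \<Sum>q\<in>Q. \<beta> q * f q $ i)" using \<beta> by (auto intro!: eq_vecI)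
    then show "c \<in> span (f ` Q)" using sum_smult_in_span[OF Q] by simp
  qed
  then have "rank A \<le> card (f ` Q)" using rank_le_card_spanning_set[OF A Q(2)] Q by auto
  also have "\<dots> \<le> card Q" using card_image_le Q by auto
  finally show ?thesis .
qed

lemma (in vec_space) exists_col_basis:
  assumes A: "A \<in> carrier_mat n nc"
  obtains b where "finite b" "card b = rank A" "b \<subseteq> carrier_vec n"
    "\<And>c. c \<in> set (cols A) \<Longrightarrow> \<exists>a. \<forall>i<n. c $ i = (\<Sum>u\<in>b. a u * u $ i)"
proof -
  let ?S = "set (cols A)"
  have S: "?S \<subseteq> carrier_vec n" using A cols_dim by blast
  have vs: "vectorspace class_ring (vs (span ?S))"
    using span_is_subspace[THEN subspace_is_vs, of ?S] S by auto
  have sm: "submodule class_ring (span ?S) V" using S by (simp add: span_is_submodule)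
  obtain b where fin: "finite b" and b: "vectorspace.basis class_ring (vs (span ?S)) b"
    using vectorspace.finite_basis_exists[OF vs fin_dim_span_cols[OF A]] by blast
  have bsub: "b \<subseteq> span ?S" and "LinearCombinations.module.span class_ring (vs (span ?S)) b = span ?S"
    using b vectorspace.basis_def[OF vs] by auto
  then have spb: "span b = span ?S" using span_li_not_depend(1)[OF bsub sm] by simp
  have bc: "b \<subseteq> carrier_vec n" using bsub span_closed S by blast
  have card: "card b = rank A" unfolding rank_def using vectorspace.dim_basis[OF vs] b fin by auto
  have "\<exists>a. \<forall>i<n. c $ i = (\<Sum>u\<in>b. a u * u $ i)" if c: "c \<in> ?S" for c
  proof -
    have "c \<in> span b" using c spb in_own_span S by auto
    then obtain a where "lincomb a b = c" using finite_in_span[OF fin] bc by auto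
    then show ?thesis using lincomb_index bc by auto
  qed
  then show ?thesis using that fin card bc by blast
qed

lemma in_box_iff_slice:
  assumes "k < length d"
  shows "in_box d x \<longleftrightarrow> in_box (d[k := 1]) (x[k := 0]) \<and> 0 \<le> x ! k \<and> x ! k < int (d ! k)"
  using assms unfolding in_box_def by (auto simp: nth_list_update)

lemma finite_in_box: "finite {x. in_box d x}"
proof -
  have "{x. in_box d x} \<subseteq> {xs. set xs \<subseteq> {0..<int (sum_list d)} \<and> length xs = length d}"
  proof safe
    fix x a assume x: "in_box d x" and a: "a \<in> set x"
    then obtain i where i: "i < length x" "a = x ! i" by (auto simp: in_set_conv_nth)
    have "d ! i \<le> sum_list d" using x i by (auto simp: in_box_def intro!: member_le_sum_list)
    then show "a \<in> {0..<int (sum_list d)}" using x i unfolding in_box_def by force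
  qed (auto simp: in_box_def)
  then show ?thesis using finite_lists_length_eq[of "{0..<int (sum_list d)}"] finite_subset by blast
qed

lemma sum_in_box_split:
  assumes k: "k < length d"
  shows "(\<Sum>x | in_box d x. f x) =
    (\<Sum>x | in_box (d[k := 1]) x. \<Sum>a = 0..<int (d ! k). f (x[k := a]))"
proof -
  let ?S = "{x. in_box (d[k := 1]) x}" and ?I = "{0..<int (d ! k)}"
  let ?h = "\<lambda>(x :: int list, a). x[k := a]"
  have "x = y \<and> a = b" if "x \<in> ?S" "y \<in> ?S" and eq: "x[k := a] = y[k := b]" for x y a b
  proof -
    have "length x = length d" "length y = length d" "x ! k = 0" "y ! k = 0"
      using that k by (auto simp: in_box_def)
    then show ?thesis
      using eq k by (metis list_update_overwrite nth_list_update_eq list_update_id)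
  qed
  then have inj: "inj_on ?h (?S \<times> ?I)" by (intro inj_onI) auto
  have image: "?h ` (?S \<times> ?I) = {x. in_box d x}"
  proof (intro equalityI subsetI)
    fix x assume "x \<in> ?h ` (?S \<times> ?I)"
    then show "x \<in> {x. in_box d x}" using k
      by (auto simp: in_box_def nth_list_update split: if_splits)
  next
    fix x assume "x \<in> {x. in_box d x}"
    then have "(x[k := 0], x ! k) \<in> ?S \<times> ?I" using k by (auto simp: in_box_def nth_list_update)
    then show "x \<in> ?h ` (?S \<times> ?I)" by force
  qed
  have "(\<Sum>x | in_box d x. f x) = (\<Sum>p\<in>?S \<times> ?I. f (?h p))"
    unfolding image[symmetric] by (rule sum.reindex[OF inj, unfolded comp_def])
  also have "\<dots> = (\<Sum>x\<in>?S. \<Sum>a\<in>?I. f (x[k := a]))"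
    by (subst sum.cartesian_product) (simp add: case_prod_beta)
  finally show ?thesis .
qed

lemma matricization_carrier:
  "matricization k d A \<in> carrier_mat (d ! k) (length (product_lists (map (\<lambda>m. [0..<m]) (d[k := 1]))))"
  unfolding matricization_def by (metis (no_types, lifting) length_map mat_of_cols_carrier)

lemma set_cols_matricization:
  "set (cols (matricization k d A)) =
     (\<lambda>x. mode_fiber k d A (map int x)) ` set (product_lists (map (\<lambda>m. [0..<m]) (d[k := 1])))"
  unfolding matricization_def by (subst cols_mat_of_cols) (auto simp: mode_fiber_def)

lemma fiber_in_cols_matricization:
  assumes "k < length d" "in_box (d[k := 1]) (x[k := 0])"
  shows "vec (d ! k) (\<lambda>i. A (x[k := int i])) \<in> set (cols (matricization k d A))"
proof -
  let ?z = "map nat (x[k := 0])"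
  have "?z \<in> set (product_lists (map (\<lambda>m. [0..<m]) (d[k := 1])))"
    using assms unfolding product_lists_set in_box_def
    by (auto simp: list_all2_conv_all_nth nth_list_update)
  moreover have "map int ?z = x[k := 0]"
    using assms unfolding in_box_def by (auto intro!: nth_equalityI)
  ultimately show ?thesis unfolding set_cols_matricization mode_fiber_def by force
qed

definition mode_invariant :: "nat \<Rightarrow> (int list \<Rightarrow> 'a) \<Rightarrow> bool" where
  "mode_invariant k f \<longleftrightarrow> (\<forall>x a. f (x[k := a]) = f x)"

lemma tucker_rank_le_dim: "tucker_rank k d A \<le> d ! k"
  unfolding tucker_rank_def by (rule vec_space.rank_le_nr[OF matricization_carrier])

lemma tucker_rank_le_card_decomposition:
  assumes k: "k < length d" and Q: "finite Q"
    and inv: "\<And>q. q \<in> Q \<Longrightarrow> mode_invariant k (c q)"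
    and A: "\<And>x. in_box d x \<Longrightarrow> A x = (\<Sum>q\<in>Q. c q x * u q (x ! k))"
  shows "tucker_rank k d A \<le> card Q"
  unfolding tucker_rank_def
proof (rule vec_space.rank_le_card_of_combinations[OF matricization_carrier Q])
  show "(\<lambda>q. vec (d ! k) (\<lambda>i. u q (int i))) ` Q \<subseteq> carrier_vec (d ! k)" by auto
  fix col assume "col \<in> set (cols (matricization k d A))"
  then obtain z where z: "z \<in> set (product_lists (map (\<lambda>m. [0..<m]) (d[k := 1])))"
    and col: "col = mode_fiber k d A (map int z)"
    unfolding set_cols_matricization by blast
  have "A ((map int z)[k := int i]) = (\<Sum>q\<in>Q. c q (map int z) * u q (int i))" if "i < d ! k" for i
  proof -
    have "in_box d ((map int z)[k := int i])"
      using z k that by (auto simp: product_lists_set list_all2_conv_all_nth in_box_def nth_list_update)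
    moreover have "length z = length d" using z by (simp add: product_lists_set list_all2_conv_all_nth)
    ultimately show ?thesis using A inv k unfolding mode_invariant_def by simp
  qed
  then show "\<exists>\<beta>. \<forall>i<d ! k. col $ i = (\<Sum>q\<in>Q. \<beta> q * vec (d ! k) (\<lambda>i. u q (int i)) $ i)"
    unfolding col mode_fiber_def by (intro exI[of _ "\<lambda>q. c q (map int z)"]) simp
qed

definition vec_zero_ext :: "'a::zero vec \<Rightarrow> int \<Rightarrow> 'a" where
  "vec_zero_ext v t = (if 0 \<le> t \<and> t < int (dim_vec v) then v $ nat t else 0)"

lemma tensor_mode_decomposition:
  assumes A: "is_tensor d A" and k: "k < length d"
  obtains b :: "real vec set" and c where "finite b" "card b = tucker_rank k d A"
    "\<And>u. mode_invariant k (c u)" "\<And>x. A x = (\<Sum>u\<in>b. c u x * vec_zero_ext u (x ! k))"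
proof -
  obtain b where fin: "finite b" and card: "card b = tucker_rank k d A"
    and bc: "b \<subseteq> carrier_vec (d ! k)"
    and cols: "\<And>col. col \<in> set (cols (matricization k d A)) \<Longrightarrow>
                 \<exists>a. \<forall>i<d ! k. col $ i = (\<Sum>u\<in>b. a u * u $ i)"
    using vec_space.exists_col_basis[OF matricization_carrier[of k d A]]
    unfolding tucker_rank_def by blast
  define fiber where "fiber x = vec (d ! k) (\<lambda>i. A (x[k := int i]))" for x
  define coords where "coords x a \<longleftrightarrow> (\<forall>i<d ! k. fiber x $ i = (\<Sum>v\<in>b. a v * v $ i))" for x a
  define c where "c u x = (if in_box (d[k := 1]) (x[k := 0]) then (SOME a. coords x a) u else 0)"
    for u x
  have inv: "mode_invariant k (c u)" for u
    unfolding mode_invariant_def c_def coords_def fiber_def by simp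
  have "A x = (\<Sum>u\<in>b. c u x * vec_zero_ext u (x ! k))" for x
  proof (cases "in_box d x")
    case False
    then have "A x = 0" using A unfolding is_tensor_def by blast
    moreover have "c u x = 0 \<or> vec_zero_ext u (x ! k) = 0" if "u \<in> b" for u
      using False that bc in_box_iff_slice[OF k, of x] unfolding c_def vec_zero_ext_def by auto
    ultimately show ?thesis by (metis (no_types, lifting) mult_eq_0_iff sum.neutral)
  next
    case True
    then have slice: "in_box (d[k := 1]) (x[k := 0])" and xk: "0 \<le> x ! k" "x ! k < int (d ! k)"
      using in_box_iff_slice[OF k] by auto
    have "\<exists>a. coords x a"
      using cols fiber_in_cols_matricization[OF k slice] unfolding coords_def fiber_def by blast
    then have "coords x (SOME a. coords x a)" by (rule someI_ex)
    moreover have "(SOME a. coords x a) = (\<lambda>v. c v x)" using slice by (simp add: c_def)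
    ultimately have coords_x: "coords x (\<lambda>v. c v x)" by simp
    have "x[k := int (nat (x ! k))] = x" using xk by simp
    then have "A x = fiber x $ nat (x ! k)" using xk by (simp add: fiber_def)
    also have "\<dots> = (\<Sum>v\<in>b. c v x * v $ nat (x ! k))"
      using coords_x xk unfolding coords_def by simp
    also have "\<dots> = (\<Sum>v\<in>b. c v x * vec_zero_ext v (x ! k))"
      using xk bc by (intro sum.cong) (auto simp: vec_zero_ext_def)
    finally show ?thesis .
  qed
  then show thesis using that fin card inv by blast
qed

lemma conv_eq_sum_in_box:
  assumes "is_tensor g G" "length t = length g"
  shows "conv G H t = (\<Sum>\<tau> | in_box g \<tau>. G \<tau> * H (map2 (-) t \<tau>))"
  unfolding conv_def
proof (rule sum.mono_neutral_left[OF finite_in_box])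
  show "{\<tau>. length \<tau> = length t \<and> G \<tau> \<noteq> 0} \<subseteq> {\<tau>. in_box g \<tau>}"
    using assms unfolding is_tensor_def by blast
  show "\<forall>\<tau>\<in>{\<tau>. in_box g \<tau>} - {\<tau>. length \<tau> = length t \<and> G \<tau> \<noteq> 0}. G \<tau> * H (map2 (-) t \<tau>) = 0"
    using assms unfolding in_box_def by auto
qed

lemma conv_mode_decomposition:
  assumes G: "is_tensor g G" and k: "k < length g" and t: "length t = length g"
    and decG: "\<And>x. G x = (\<Sum>p\<in>P. cG p x * uG p (x ! k))" and invG: "\<And>p. mode_invariant k (cG p)"
    and decH: "\<And>x. H x = (\<Sum>q\<in>Q. cH q x * uH q (x ! k))" and invH: "\<And>q. mode_invariant k (cH q)"
  shows "conv G H t = (\<Sum>(p, q)\<in>P \<times> Q.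
    (\<Sum>\<tau> | in_box (g[k := 1]) \<tau>. cG p \<tau> * cH q (map2 (-) t \<tau>)) *
    (\<Sum>a = 0..<int (g ! k). uG p a * uH q (t ! k - a)))"
proof -
  let ?S = "{\<tau>. in_box (g[k := 1]) \<tau>}" and ?I = "{0..<int (g ! k)}"
  let ?f = "\<lambda>\<tau> a (p, q). cG p \<tau> * cH q (map2 (-) t \<tau>) * (uG p a * uH q (t ! k - a))"
  have summand: "G (\<tau>[k := a]) * H (map2 (-) t (\<tau>[k := a])) = (\<Sum>pq\<in>P \<times> Q. ?f \<tau> a pq)"
    if "\<tau> \<in> ?S" for \<tau> a
  proof -
    have len: "length \<tau> = length g" using that by (simp add: in_box_def)
    have "G (\<tau>[k := a]) = (\<Sum>p\<in>P. cG p \<tau> * uG p a)"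
      using decG invG k len unfolding mode_invariant_def by simp
    moreover have "H (map2 (-) t (\<tau>[k := a])) = (\<Sum>q\<in>Q. cH q (map2 (-) t \<tau>) * uH q (t ! k - a))"
      using decH invH k len t unfolding mode_invariant_def by (simp add: map2_update_right)
    ultimately show ?thesis
      by (simp add: sum_product sum.cartesian_product mult_ac)
  qed
  have "conv G H t = (\<Sum>\<tau>\<in>?S. \<Sum>a\<in>?I. G (\<tau>[k := a]) * H (map2 (-) t (\<tau>[k := a])))"
    unfolding conv_eq_sum_in_box[OF G t] by (rule sum_in_box_split[OF k])
  also have "\<dots> = (\<Sum>\<tau>\<in>?S. \<Sum>a\<in>?I. \<Sum>pq\<in>P \<times> Q. ?f \<tau> a pq)"
    by (intro sum.cong refl) (simp add: summand)
  also have "\<dots> = (\<Sum>\<tau>\<in>?S. \<Sum>pq\<in>P \<times> Q. \<Sum>a\<in>?I. ?f \<tau> a pq)"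
    by (intro sum.cong refl) (rule sum.swap)
  also have "\<dots> = (\<Sum>pq\<in>P \<times> Q. \<Sum>\<tau>\<in>?S. \<Sum>a\<in>?I. ?f \<tau> a pq)"
    by (rule sum.swap)
  also have "\<dots> = (\<Sum>(p, q)\<in>P \<times> Q.
    (\<Sum>\<tau>\<in>?S. cG p \<tau> * cH q (map2 (-) t \<tau>)) * (\<Sum>a\<in>?I. uG p a * uH q (t ! k - a)))"
    unfolding sum_product by (intro sum.cong refl) (clarsimp simp: mult_ac)
  finally show ?thesis .
qed

lemma tucker_rank_conv_box_le:
  assumes G: "is_tensor g G" and k: "k < length g"
    and lengths: "length s = length g" "length off = length g"
    and P: "finite P" and decG: "\<And>x. G x = (\<Sum>p\<in>P. cG p x * uG p (x ! k))"
    and invG: "\<And>p. mode_invariant k (cG p)"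
    and Q: "finite Q" and decH: "\<And>x. H x = (\<Sum>q\<in>Q. cH q x * uH q (x ! k))"
    and invH: "\<And>q. mode_invariant k (cH q)"
  shows "tucker_rank k s (conv_box off s G H) \<le> card P * card Q"
proof -
  define c where "c = (\<lambda>(p, q) j.
    \<Sum>\<tau> | in_box (g[k := 1]) \<tau>. cG p \<tau> * cH q (map2 (-) (map2 (+) off j) \<tau>))"
  define u where "u = (\<lambda>(p, q) x. \<Sum>a = 0..<int (g ! k). uG p a * uH q (off ! k + x - a))"
  have "tucker_rank k s (conv_box off s G H) \<le> card (P \<times> Q)"
  proof (rule tucker_rank_le_card_decomposition)
    show "mode_invariant k (c pq)" for pq
      using invH k lengths unfolding c_def mode_invariant_def
      by (auto simp: map2_update_left map2_update_right in_box_def intro!: sum.cong split: prod.splits)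
    show "conv_box off s G H j = (\<Sum>pq\<in>P \<times> Q. c pq j * u pq (j ! k))" if "in_box s j" for j
    proof -
      have "length (map2 (+) off j) = length g" "map2 (+) off j ! k = off ! k + j ! k"
        using that k lengths by (auto simp: in_box_def)
      then show ?thesis
        using that conv_mode_decomposition[OF G k _ decG invG decH invH]
        unfolding conv_box_def c_def u_def by (simp add: case_prod_beta)
    qed
  qed (use P Q k lengths in auto)
  then show ?thesis by (simp add: card_cartesian_product)
qed

theorem lemma30:
  fixes n :: nat and g h s :: "nat list" and off :: "int list"
    and G H :: "int list \<Rightarrow> real"
  assumes "n \<ge> 2"
    and "length g = n" and "length h = n" and "length s = n" and "length off = n"
    and "is_tensor g G" and "is_tensor h H"
    and "\<exists>x. G x \<noteq> 0" and "\<exists>x. H x \<noteq> 0"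
    and "k < n"
  shows "tucker_rank k s (conv_box off s G H)
           \<le> min (s ! k) (tucker_rank k g G * tucker_rank k h H)"
proof -
  have k: "k < length g" "k < length h" using assms by simp_all
  have lengths: "length s = length g" "length off = length g" using assms by simp_all
  obtain P cG where P: "finite P" "card P = tucker_rank k g G"
    and invG: "\<And>p. mode_invariant k (cG p)"
    and decG: "\<And>x. G x = (\<Sum>p\<in>P. cG p x * vec_zero_ext p (x ! k))"
    using tensor_mode_decomposition[OF \<open>is_tensor g G\<close> k(1)] by blast
  obtain Q cH where Q: "finite Q" "card Q = tucker_rank k h H"
    and invH: "\<And>q. mode_invariant k (cH q)"
    and decH: "\<And>x. H x = (\<Sum>q\<in>Q. cH q x * vec_zero_ext q (x ! k))"
    using tensor_mode_decomposition[OF \<open>is_tensor h H\<close> k(2)] by blast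
  have "tucker_rank k s (conv_box off s G H) \<le> card P * card Q"
    by (rule tucker_rank_conv_box_le[OF \<open>is_tensor g G\<close> k(1) lengths P(1) decG invG Q(1) decH invH])
  then show ?thesis using tucker_rank_le_dim P Q by simp
qed

end
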